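(* Let $\mu$ be a distribution on $\Sigma\times\Gamma$ (finite sets) and $t:\mathsf{supp}(\mu)\to\mathbb{Z}_m$, defining a two-player $\mathsf{XOR}$ game $\mathcal{G}$ that is connected and has value less than $1$. Let $T(x,y)=\omega^{-t(x,y)}$ with $\omega=e^{2\pi i/m}$. Then there is a constant $c=c(\mathcal{G},\mu)>0$ such that for all $n$ and all $F:\Sigma^n\to\mathbb{D}$, $G:\Gamma^n\to\mathbb{D}$, $$\left|\mathbb{E}_{(x,y)\sim\mu^{\otimes n}}\Big[F(x)G(y)\prod_{i=1}^nT(x_i,y_i)\Big]\right|\le 2^{-cn}.$$
   Context: $\mathbb{D}$ is the closed unit disk in $\mathbb{C}$. The game is connected if the bipartite graph on vertex set $\Sigma\sqcup\Gamma$ with edge set $\mathsf{supp}(\mu)$ is connected. The value of the game is $\max_{f:\Sigma\to\mathbb{Z}_m,\,g:\Gamma\to\mathbb{Z}_m}\Pr_{(x,y)\sim\mu}[f(x)+g(y)=t(x,y)]$. *)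

theory Defs
  imports "HOL-Analysis.Analysis"
begin

definition is_distribution :: "('a::finite \<times> 'b::finite \<Rightarrow> real) \<Rightarrow> bool" where
  "is_distribution \<mu> \<longleftrightarrow> (\<forall>p. \<mu> p \<ge> 0) \<and> (\<Sum>p\<in>UNIV. \<mu> p) = 1"

definition supp :: "('a \<times> 'b \<Rightarrow> real) \<Rightarrow> ('a \<times> 'b) set" where
  "supp \<mu> = {p. \<mu> p \<noteq> 0}"

definition game_edge :: "('a \<times> 'b \<Rightarrow> real) \<Rightarrow> ('a + 'b) \<Rightarrow> ('a + 'b) \<Rightarrow> bool" where
  "game_edge \<mu> u v \<longleftrightarrow>
     (\<exists>x y. (x, y) \<in> supp \<mu> \<and> ((u = Inl x \<and> v = Inr y) \<or> (u = Inr y \<and> v = Inl x)))"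

definition game_connected :: "('a \<times> 'b \<Rightarrow> real) \<Rightarrow> bool" where
  "game_connected \<mu> \<longleftrightarrow> (\<forall>u v. (game_edge \<mu>)\<^sup>*\<^sup>* u v)"

(* Elements of Z_m are represented by integers, equality in Z_m is congruence mod m;
   t is only relevant on supp \<mu>. *)
definition win_prob :: "('a::finite \<times> 'b::finite \<Rightarrow> real) \<Rightarrow> nat \<Rightarrow> ('a \<Rightarrow> 'b \<Rightarrow> int)
    \<Rightarrow> ('a \<Rightarrow> int) \<Rightarrow> ('b \<Rightarrow> int) \<Rightarrow> real" where
  "win_prob \<mu> m t f g = (\<Sum>(x, y)\<in>UNIV. if (f x + g y) mod int m = t x y mod int m then \<mu> (x, y) else 0)"

definition xor_value :: "('a::finite \<times> 'b::finite \<Rightarrow> real) \<Rightarrow> nat \<Rightarrow> ('a \<Rightarrow> 'b \<Rightarrow> int) \<Rightarrow> real" where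
  "xor_value \<mu> m t = Max {win_prob \<mu> m t f g | f g.
      (\<forall>x. f x \<in> {0..<int m}) \<and> (\<forall>y. g y \<in> {0..<int m})}"

definition omega :: "nat \<Rightarrow> complex" where
  "omega m = exp (2 * pi * \<i> / of_nat m)"

definition Tfun :: "nat \<Rightarrow> ('a \<Rightarrow> 'b \<Rightarrow> int) \<Rightarrow> 'a \<Rightarrow> 'b \<Rightarrow> complex" where
  "Tfun m t x y = omega m powi (- t x y)"

(* E_{(x,y) ~ \<mu>^{\<otimes>n}} [F(x) G(y) \<Prod>_i T(x_i,y_i)], n-tuples as functions on {..<n} *)
definition corr :: "('a::finite \<times> 'b::finite \<Rightarrow> real) \<Rightarrow> nat \<Rightarrow> ('a \<Rightarrow> 'b \<Rightarrow> int) \<Rightarrow> nat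
    \<Rightarrow> ((nat \<Rightarrow> 'a) \<Rightarrow> complex) \<Rightarrow> ((nat \<Rightarrow> 'b) \<Rightarrow> complex) \<Rightarrow> complex" where
  "corr \<mu> m t n F G =
     (\<Sum>x\<in>PiE {..<n} (\<lambda>_. UNIV). \<Sum>y\<in>PiE {..<n} (\<lambda>_. UNIV).
        of_real (\<Prod>i<n. \<mu> (x i, y i)) * F x * G y * (\<Prod>i<n. Tfun m t (x i) (y i)))"

end

theory Submission
  imports Defs
begin

text \<open>Let \<open>P\<close> map \<open>f : \<Sigma> \<rightarrow> \<complex>\<close> to \<open>y \<mapsto> \<bbbE>[T(x,y) f(x) | y]\<close>, from \<open>L\<^sup>2(\<mu>\<^sub>X)\<close> to
  \<open>L\<^sup>2(\<mu>\<^sub>Y)\<close>. By Cauchy--Schwarz \<open>\<parallel>P f\<parallel> \<le> \<parallel>f\<parallel>\<close>, and equality forces \<open>T(x,y) f(x)\<close> to be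
  independent of \<open>x\<close> for every \<open>y\<close>. Propagating this along the connected support graph, all values
  of \<open>f\<close> become \<open>f(x\<^sub>0)\<close> times \<open>m\<close>-th roots of unity, and their exponents form a strategy that
  wins with probability 1, contradicting value \<open>< 1\<close>. Compactness of the unit sphere then gives
  \<open>\<parallel>P\<parallel> \<le> \<rho> < 1\<close>. Splitting off the last coordinate, Cauchy--Schwarz over the last question
  \<open>y\<^sub>n\<close> and the bound on \<open>P\<close> in the last coordinate of \<open>F\<close> yield
  \<open>|\<bbbE>[F G \<Prod> T]| \<le> \<rho>\<^sup>n \<parallel>F\<parallel> \<parallel>G\<parallel>\<close> by induction on \<open>n\<close>.\<close>

lemma sum_pair_UNIV:
  fixes \<mu> :: "'a::finite \<times> 'b::finite \<Rightarrow> 'c::comm_monoid_add"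
  shows "(\<Sum>x\<in>UNIV. \<Sum>y\<in>UNIV. \<mu> (x, y)) = (\<Sum>p\<in>UNIV. \<mu> p)"
  unfolding sum.cartesian_product UNIV_Times_UNIV by (simp only: case_prod_eta)

lemma sum_PiE_lessThan_Suc:
  "(\<Sum>x\<in>PiE {..<Suc n} (\<lambda>_. A). h x) = (\<Sum>x\<in>PiE {..<n} (\<lambda>_. A). \<Sum>a\<in>A. h (x(n := a)))"
proof -
  have inj: "inj_on (\<lambda>(a, x). x(n := a)) (A \<times> PiE {..<n} (\<lambda>_. A))"
    by (rule inj_combinator) auto
  have "(\<Sum>x\<in>PiE {..<Suc n} (\<lambda>_. A). h x) = (\<Sum>(a, x)\<in>A \<times> PiE {..<n} (\<lambda>_. A). h (x(n := a)))"
    unfolding lessThan_Suc PiE_insert_eq sum.reindex[OF inj] by (simp add: case_prod_unfold)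
  also have "\<dots> = (\<Sum>a\<in>A. \<Sum>x\<in>PiE {..<n} (\<lambda>_. A). h (x(n := a)))"
    by (rule sum.cartesian_product[symmetric])
  finally show ?thesis by (simp only: sum.swap[of _ A])
qed

lemma finite_functions_into_interval: "finite {h :: 'a::finite \<Rightarrow> int. \<forall>x. h x \<in> {0..<k}}"
proof -
  have "{h :: 'a \<Rightarrow> int. \<forall>x. h x \<in> {0..<k}} = PiE UNIV (\<lambda>_. {0..<k})"
    by (auto simp: PiE_UNIV_domain)
  then show ?thesis by (simp add: finite_PiE)
qed

lemma weighted_variance_eq_pairwise:
  fixes w x :: "'a \<Rightarrow> real"
  shows "(\<Sum>a\<in>A. w a) * (\<Sum>a\<in>A. w a * (x a)\<^sup>2) - (\<Sum>a\<in>A. w a * x a)\<^sup>2 =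
         (\<Sum>a\<in>A. \<Sum>b\<in>A. w a * w b * (x a - x b)\<^sup>2) / 2"
proof -
  have "(\<Sum>a\<in>A. \<Sum>b\<in>A. w a * w b * (x a - x b)\<^sup>2) =
        (\<Sum>a\<in>A. \<Sum>b\<in>A. (w a * (x a)\<^sup>2) * w b) + (\<Sum>a\<in>A. \<Sum>b\<in>A. w a * (w b * (x b)\<^sup>2))
          - 2 * (\<Sum>a\<in>A. \<Sum>b\<in>A. (w a * x a) * (w b * x b))"
    by (simp add: sum.distrib sum_subtractf sum_distrib_left power2_diff algebra_simps)
  also have "\<dots> = (\<Sum>a\<in>A. w a * (x a)\<^sup>2) * (\<Sum>a\<in>A. w a) + (\<Sum>a\<in>A. w a) * (\<Sum>a\<in>A. w a * (x a)\<^sup>2)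
                     - 2 * ((\<Sum>a\<in>A. w a * x a) * (\<Sum>a\<in>A. w a * x a))"
    by (simp only: sum_product)
  finally show ?thesis by (simp add: power2_eq_square algebra_simps)
qed

lemma weighted_variance_eq_pairwise_complex:
  fixes w :: "'a \<Rightarrow> real" and z :: "'a \<Rightarrow> complex"
  shows "(\<Sum>a\<in>A. w a) * (\<Sum>a\<in>A. w a * (cmod (z a))\<^sup>2) - (cmod (\<Sum>a\<in>A. of_real (w a) * z a))\<^sup>2 =
         (\<Sum>a\<in>A. \<Sum>b\<in>A. w a * w b * (cmod (z a - z b))\<^sup>2) / 2"
proof -
  let ?Re = "\<lambda>a. Re (z a)" and ?Im = "\<lambda>a. Im (z a)"
  have C: "(cmod (\<Sum>a\<in>A. of_real (w a) * z a))\<^sup>2 =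
           (\<Sum>a\<in>A. w a * ?Re a)\<^sup>2 + (\<Sum>a\<in>A. w a * ?Im a)\<^sup>2"
    by (simp add: cmod_power2)
  have Q: "(\<Sum>a\<in>A. w a * (cmod (z a))\<^sup>2) = (\<Sum>a\<in>A. w a * (?Re a)\<^sup>2) + (\<Sum>a\<in>A. w a * (?Im a)\<^sup>2)"
    by (simp add: cmod_power2 sum.distrib algebra_simps)
  have P: "(\<Sum>a\<in>A. \<Sum>b\<in>A. w a * w b * (cmod (z a - z b))\<^sup>2) =
           (\<Sum>a\<in>A. \<Sum>b\<in>A. w a * w b * (?Re a - ?Re b)\<^sup>2) +
           (\<Sum>a\<in>A. \<Sum>b\<in>A. w a * w b * (?Im a - ?Im b)\<^sup>2)"
    by (simp add: cmod_power2 sum.distrib algebra_simps)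
  have "(\<Sum>a\<in>A. w a) * (\<Sum>a\<in>A. w a * (cmod (z a))\<^sup>2) - (cmod (\<Sum>a\<in>A. of_real (w a) * z a))\<^sup>2 =
        ((\<Sum>a\<in>A. w a) * (\<Sum>a\<in>A. w a * (?Re a)\<^sup>2) - (\<Sum>a\<in>A. w a * ?Re a)\<^sup>2) +
        ((\<Sum>a\<in>A. w a) * (\<Sum>a\<in>A. w a * (?Im a)\<^sup>2) - (\<Sum>a\<in>A. w a * ?Im a)\<^sup>2)"
    unfolding C Q by (simp only: distrib_left)
  also have "\<dots> = (\<Sum>a\<in>A. \<Sum>b\<in>A. w a * w b * (cmod (z a - z b))\<^sup>2) / 2"
    unfolding P weighted_variance_eq_pairwise by (simp only: add_divide_distrib)
  finally show ?thesis .
qed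

lemma sum_sqrt_mult_le_weighted:
  fixes A B w :: "'c \<Rightarrow> real"
  assumes "\<And>i. 0 \<le> A i" and "\<And>i. 0 \<le> B i" and "\<And>i. 0 < w i"
  shows "(\<Sum>i\<in>I. sqrt (A i) * sqrt (B i)) \<le> sqrt (\<Sum>i\<in>I. A i / w i) * sqrt (\<Sum>i\<in>I. w i * B i)"
proof -
  have "sqrt (A i) * sqrt (B i) = \<bar>sqrt (A i / w i)\<bar> * \<bar>sqrt (w i * B i)\<bar>" for i
    using assms[of i] by (simp add: real_sqrt_mult[symmetric])
  then have "(\<Sum>i\<in>I. sqrt (A i) * sqrt (B i)) =
             (\<Sum>i\<in>I. \<bar>sqrt (A i / w i)\<bar> * \<bar>sqrt (w i * B i)\<bar>)" by simp
  also have "\<dots> \<le> L2_set (\<lambda>i. sqrt (A i / w i)) I * L2_set (\<lambda>i. sqrt (w i * B i)) I"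
    by (rule L2_set_mult_ineq)
  also have "\<dots> = sqrt (\<Sum>i\<in>I. A i / w i) * sqrt (\<Sum>i\<in>I. w i * B i)"
    unfolding L2_set_def using assms by (simp add: less_imp_le)
  finally show ?thesis .
qed

lemma uniform_gap_on_sphere:
  fixes Q :: "'v::euclidean_space \<Rightarrow> real"
  assumes "continuous_on UNIV Q"
    and "\<And>c u. Q (c *\<^sub>R u) = c\<^sup>2 * Q u"
    and "\<And>u. u \<noteq> 0 \<Longrightarrow> Q u < (norm u)\<^sup>2"
  shows "\<exists>\<kappa>. 0 < \<kappa> \<and> \<kappa> < 1 \<and> (\<forall>u. Q u \<le> \<kappa> * (norm u)\<^sup>2)"
proof -
  have "sphere (0::'v) 1 \<noteq> {}" using vector_choose_size[of 1] by auto
  then obtain u0 where u0: "u0 \<in> sphere 0 1" and max: "\<And>u. u \<in> sphere 0 1 \<Longrightarrow> Q u \<le> Q u0"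
    using continuous_attains_sup[OF compact_sphere _ continuous_on_subset[OF assms(1)]] by blast
  define \<kappa> where "\<kappa> = max (1/2) (Q u0)"
  have "u0 \<noteq> 0" using u0 by auto
  then have "Q u0 < 1" using assms(3)[of u0] u0 by simp
  then have "0 < \<kappa>" "\<kappa> < 1" unfolding \<kappa>_def by auto
  moreover have "Q u \<le> \<kappa> * (norm u)\<^sup>2" for u
  proof (cases "u = 0")
    case True
    then show ?thesis using assms(2)[of 0 0] by simp
  next
    case False
    then have "Q u = (norm u)\<^sup>2 * Q (u /\<^sub>R norm u)" using assms(2)[of "norm u" "u /\<^sub>R norm u"] by simp
    also have "\<dots> \<le> (norm u)\<^sup>2 * \<kappa>"
      using max[of "u /\<^sub>R norm u"] False unfolding \<kappa>_def by (intro mult_left_mono) auto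
    finally show ?thesis by (simp add: mult.commute)
  qed
  ultimately show ?thesis by blast
qed

lemma omega_nonzero [simp]: "omega m \<noteq> 0"
  by (simp add: omega_def)

lemma omega_powi: "omega m powi j = exp (2 * pi * \<i> * of_int j / of_nat m)"
proof (cases "j \<ge> 0")
  case True
  then obtain k where "j = int k" by (metis nonneg_eq_int)
  then show ?thesis unfolding omega_def
    by (simp add: exp_of_nat_mult[symmetric] mult_ac)
next
  case False
  then obtain k where "j = - int k" by (metis le_cases neg_0_le_iff_le nonneg_eq_int minus_minus)
  then show ?thesis unfolding omega_def
    by (simp add: exp_of_nat_mult[symmetric] mult_ac power_int_minus exp_minus[symmetric])
qed

lemma norm_Tfun [simp]: "norm (Tfun m t x y) = 1"
  unfolding Tfun_def omega_powi by (simp add: norm_exp_eq_Re)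

lemma omega_powi_eq_1_imp_dvd:
  assumes "m \<ge> 1" and "omega m powi j = 1"
  shows "int m dvd j"
proof -
  obtain k :: int where "Im (2 * pi * \<i> * of_int j / of_nat m) = of_int (2 * k) * pi"
    using assms(2) exp_eq_1 unfolding omega_powi by blast
  then have "real_of_int j = real_of_int (k * int m)"
    using assms(1) by (simp add: field_simps)
  then have "j = k * int m" by (simp only: of_int_eq_iff)
  then show ?thesis by simp
qed

section \<open>Perfect strategies\<close>

lemma omega_powers_mult_iff:
  "(\<exists>k. omega m powi j * z = c * omega m powi k) \<longleftrightarrow> (\<exists>k. z = c * omega m powi k)"
proof
  assume "\<exists>k. omega m powi j * z = c * omega m powi k"
  then obtain k where "omega m powi j * z = c * omega m powi k" ..
  then have "z = c * omega m powi (k - j)" by (simp add: power_int_diff field_simps)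
  then show "\<exists>k. z = c * omega m powi k" ..
next
  assume "\<exists>k. z = c * omega m powi k"
  then obtain k where "z = c * omega m powi k" ..
  then have "omega m powi j * z = c * omega m powi (j + k)" by (simp add: power_int_add mult_ac)
  then show "\<exists>k. omega m powi j * z = c * omega m powi k" ..
qed

lemma win_prob_mod_strategies:
  "win_prob \<mu> m t (\<lambda>x. f x mod int m) (\<lambda>y. g y mod int m) = win_prob \<mu> m t f g"
  unfolding win_prob_def by (simp add: mod_add_eq)

lemma win_prob_le_xor_value:
  fixes \<mu> :: "'a::finite \<times> 'b::finite \<Rightarrow> real"
  assumes "m \<ge> 1"
  shows "win_prob \<mu> m t f g \<le> xor_value \<mu> m t"
proof -
  let ?R = "\<lambda>h :: _ \<Rightarrow> int. \<forall>x. h x \<in> {0..<int m}"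
  let ?W = "{win_prob \<mu> m t f g | f g. ?R f \<and> ?R g}"
  have "?W = (\<lambda>(f, g). win_prob \<mu> m t f g) ` ({f. ?R f} \<times> {g. ?R g})"
    by auto
  then have "finite ?W"
    by (simp only:) (intro finite_imageI finite_cartesian_product finite_functions_into_interval)
  moreover have "win_prob \<mu> m t (\<lambda>x. f x mod int m) (\<lambda>y. g y mod int m) \<in> ?W"
    using assms by fastforce
  ultimately show ?thesis
    unfolding xor_value_def win_prob_mod_strategies by (rule Max_ge)
qed

lemma win_prob_perfect:
  assumes "\<And>x y. \<mu> (x, y) \<noteq> 0 \<Longrightarrow> int m dvd (f x + g y - t x y)"
  shows "win_prob \<mu> m t f g = (\<Sum>p\<in>UNIV. \<mu> p)"
  unfolding win_prob_def
proof (intro sum.cong refl, clarify)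
  fix x y
  show "(if (f x + g y) mod int m = t x y mod int m then \<mu> (x, y) else 0) = \<mu> (x, y)"
    using assms[of x y] by (auto simp: mod_eq_dvd_iff)
qed

lemma game_connected_propagate:
  assumes "game_connected \<mu>" and "P u"
    and "\<And>x y. \<mu> (x, y) \<noteq> 0 \<Longrightarrow> P (Inl x) \<longleftrightarrow> P (Inr y)"
  shows "P v"
proof -
  have "(game_edge \<mu>)\<^sup>*\<^sup>* u v" using assms(1) unfolding game_connected_def by blast
  then show ?thesis
    by (induction rule: rtranclp_induct) (use assms(2,3) in \<open>auto simp: game_edge_def supp_def\<close>)
qed

lemma game_connected_neighbour_fst:
  assumes "game_connected \<mu>" shows "\<exists>y. \<mu> (x, y) \<noteq> 0"
  using game_connected_propagate[OF assms, of "\<lambda>v. v \<noteq> Inl x" "Inr undefined" "Inl x"] by auto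

lemma game_connected_neighbour_snd:
  assumes "game_connected \<mu>" shows "\<exists>x. \<mu> (x, y) \<noteq> 0"
  using game_connected_propagate[OF assms, of "\<lambda>v. v \<noteq> Inr y" "Inl undefined" "Inr y"] by auto

lemma perfect_strategy_of_consistent:
  fixes \<mu> :: "'a \<times> 'b \<Rightarrow> real" and f :: "'a \<Rightarrow> complex"
  assumes m: "m \<ge> 1" and conn: "game_connected \<mu>"
    and consistent: "\<And>x x' y. \<mu> (x, y) \<noteq> 0 \<Longrightarrow> \<mu> (x', y) \<noteq> 0 \<Longrightarrow>
                       Tfun m t x y * f x = Tfun m t x' y * f x'"
    and "f x0 \<noteq> 0"
  shows "\<exists>F G. \<forall>x y. \<mu> (x, y) \<noteq> 0 \<longrightarrow> int m dvd (F x + G y - t x y)"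
proof -
  let ?\<omega> = "omega m"
  obtain nb where nb: "\<And>y. \<mu> (nb y, y) \<noteq> 0"
    using game_connected_neighbour_snd[OF conn] by metis
  \<comment> \<open>\<open>p y\<close> is the common value of \<open>T(x,y) f(x)\<close> over all neighbours \<open>x\<close> of \<open>y\<close>.\<close>
  define p where "p y = Tfun m t (nb y) y * f (nb y)" for y
  have p_eq: "p y = ?\<omega> powi (- t x y) * f x" if "\<mu> (x, y) \<noteq> 0" for x y
    using consistent[OF nb that] unfolding p_def Tfun_def by simp
  have "\<exists>k. case_sum f p v = f x0 * ?\<omega> powi k" for v
  proof (rule game_connected_propagate[OF conn])
    show "\<exists>k. case_sum f p (Inl x0) = f x0 * ?\<omega> powi k" by (auto intro: exI[of _ 0])
  qed (simp add: p_eq omega_powers_mult_iff)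
  then have "\<forall>x. \<exists>k. f x = f x0 * ?\<omega> powi k" and "\<forall>y. \<exists>k. p y = f x0 * ?\<omega> powi (- k)"
    by (metis sum.case(1), metis sum.case(2) minus_minus)
  then obtain F G where F: "\<And>x. f x = f x0 * ?\<omega> powi F x" and G: "\<And>y. p y = f x0 * ?\<omega> powi (- G y)"
    by metis
  have "int m dvd (F x + G y - t x y)" if "\<mu> (x, y) \<noteq> 0" for x y
  proof (rule omega_powi_eq_1_imp_dvd[OF m])
    have "f x0 * ?\<omega> powi (- G y) = ?\<omega> powi (- t x y) * f x"
      using p_eq[OF that] G[of y] by simp
    also have "\<dots> = f x0 * ?\<omega> powi (F x - t x y)"
      using F[of x] power_int_add[of ?\<omega> "F x" "- t x y"] by (simp add: mult_ac)
    finally have "?\<omega> powi (F x - t x y) = ?\<omega> powi (- G y)" using \<open>f x0 \<noteq> 0\<close> by simp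
    then show "?\<omega> powi (F x + G y - t x y) = 1"
      using power_int_diff[of ?\<omega> "F x - t x y" "- G y"] by (simp add: algebra_simps)
  qed
  then show ?thesis by blast
qed

section \<open>The twisted averaging operator is a strict contraction\<close>

definition marginal_fst :: "('a::finite \<times> 'b::finite \<Rightarrow> real) \<Rightarrow> 'a \<Rightarrow> real" where
  "marginal_fst \<mu> x = (\<Sum>y\<in>UNIV. \<mu> (x, y))"

definition marginal_snd :: "('a::finite \<times> 'b::finite \<Rightarrow> real) \<Rightarrow> 'b \<Rightarrow> real" where
  "marginal_snd \<mu> y = (\<Sum>x\<in>UNIV. \<mu> (x, y))"

definition wnorm_sq :: "('a::finite \<Rightarrow> real) \<Rightarrow> ('a \<Rightarrow> complex) \<Rightarrow> real" where
  "wnorm_sq w f = (\<Sum>x\<in>UNIV. w x * (cmod (f x))\<^sup>2)"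

text \<open>\<open>\<parallel>P f\<parallel>\<^sup>2 = \<Sum>\<^sub>y \<mu>\<^sub>Y(y) |\<bbbE>[T(x,y) f(x) | y]|\<^sup>2\<close>, with the conditional expectation written out.\<close>
definition twisted_norm_sq ::
    "('a::finite \<times> 'b::finite \<Rightarrow> real) \<Rightarrow> nat \<Rightarrow> ('a \<Rightarrow> 'b \<Rightarrow> int) \<Rightarrow> ('a \<Rightarrow> complex) \<Rightarrow> real" where
  "twisted_norm_sq \<mu> m t f =
     (\<Sum>y\<in>UNIV. (cmod (\<Sum>x\<in>UNIV. of_real (\<mu> (x, y)) * Tfun m t x y * f x))\<^sup>2 / marginal_snd \<mu> y)"

lemma marginal_fst_pos:
  assumes "\<And>p. 0 \<le> \<mu> p" and "game_connected \<mu>"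
  shows "0 < marginal_fst \<mu> x"
proof -
  obtain y where "\<mu> (x, y) \<noteq> 0" using game_connected_neighbour_fst[OF assms(2)] by blast
  moreover have "\<mu> (x, y) \<le> marginal_fst \<mu> x"
    unfolding marginal_fst_def using assms(1) by (intro member_le_sum) auto
  ultimately show ?thesis using assms(1)[of "(x, y)"] by linarith
qed

lemma marginal_snd_pos:
  assumes "\<And>p. 0 \<le> \<mu> p" and "game_connected \<mu>"
  shows "0 < marginal_snd \<mu> y"
proof -
  obtain x where "\<mu> (x, y) \<noteq> 0" using game_connected_neighbour_snd[OF assms(2)] by blast
  moreover have "\<mu> (x, y) \<le> marginal_snd \<mu> y"
    unfolding marginal_snd_def using assms(1) by (intro member_le_sum) auto
  ultimately show ?thesis using assms(1)[of "(x, y)"] by linarith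
qed

lemma sum_marginal_fst: "(\<Sum>x\<in>UNIV. marginal_fst \<mu> x) = (\<Sum>p\<in>UNIV. \<mu> p)"
  unfolding marginal_fst_def by (rule sum_pair_UNIV)

lemma sum_marginal_snd: "(\<Sum>y\<in>UNIV. marginal_snd \<mu> y) = (\<Sum>p\<in>UNIV. \<mu> p)"
  unfolding marginal_snd_def by (subst sum.swap) (rule sum_pair_UNIV)

text \<open>Cauchy--Schwarz for \<open>P\<close>, with its defect made explicit.\<close>
lemma wnorm_sq_minus_twisted_norm_sq:
  assumes "\<And>y. 0 < marginal_snd \<mu> y"
  shows "wnorm_sq (marginal_fst \<mu>) f - twisted_norm_sq \<mu> m t f =
         (\<Sum>y\<in>UNIV. (\<Sum>x\<in>UNIV. \<Sum>x'\<in>UNIV. \<mu> (x, y) * \<mu> (x', y) *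
            (cmod (Tfun m t x y * f x - Tfun m t x' y * f x'))\<^sup>2) / (2 * marginal_snd \<mu> y))"
proof -
  let ?z = "\<lambda>y x. Tfun m t x y * f x"
  have W: "wnorm_sq (marginal_fst \<mu>) f = (\<Sum>y\<in>UNIV. \<Sum>x\<in>UNIV. \<mu> (x, y) * (cmod (?z y x))\<^sup>2)"
    unfolding wnorm_sq_def marginal_fst_def
    by (simp add: sum_distrib_right norm_mult) (rule sum.swap)
  have T: "twisted_norm_sq \<mu> m t f =
                 (\<Sum>y\<in>UNIV. (cmod (\<Sum>x\<in>UNIV. of_real (\<mu> (x, y)) * ?z y x))\<^sup>2 / marginal_snd \<mu> y)"
    unfolding twisted_norm_sq_def by (simp add: mult.assoc)
  have gap: "(\<Sum>x\<in>UNIV. \<mu> (x, y) * (cmod (?z y x))\<^sup>2) -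
                 (cmod (\<Sum>x\<in>UNIV. of_real (\<mu> (x, y)) * ?z y x))\<^sup>2 / marginal_snd \<mu> y =
                 (\<Sum>x\<in>UNIV. \<Sum>x'\<in>UNIV. \<mu> (x, y) * \<mu> (x', y) * (cmod (?z y x - ?z y x'))\<^sup>2)
                   / (2 * marginal_snd \<mu> y)" (is "?Q - ?C / ?S = ?P / (2 * ?S)") for y
  proof -
    have "?Q - ?C / ?S = (?S * ?Q - ?C) / ?S" using assms[of y] by (simp add: diff_divide_distrib)
    also have "?S * ?Q - ?C = ?P / 2"
      unfolding marginal_snd_def by (rule weighted_variance_eq_pairwise_complex)
    finally show ?thesis by simp
  qed
  show ?thesis
    unfolding W T sum_subtractf[symmetric] by (intro sum.cong refl gap)
qed

lemma wnorm_sq_divide_sqrt_weight: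
  fixes u :: "complex^'a::finite"
  assumes "\<And>x. 0 < w x"
  shows "wnorm_sq w (\<lambda>x. u $ x / of_real (sqrt (w x))) = (norm u)\<^sup>2"
proof -
  have "(norm u)\<^sup>2 = (\<Sum>x\<in>UNIV. (cmod (u $ x))\<^sup>2)"
    unfolding norm_vec_def L2_set_def by (simp add: sum_nonneg)
  also have "\<dots> = wnorm_sq w (\<lambda>x. u $ x / of_real (sqrt (w x)))"
    unfolding wnorm_sq_def
    by (intro sum.cong refl) (use assms in \<open>simp add: norm_divide power_divide less_imp_le less_imp_neq[symmetric]\<close>)
  finally show ?thesis ..
qed

lemma twisted_norm_sq_scale:
  "twisted_norm_sq \<mu> m t (\<lambda>x. of_real c * f x) = c\<^sup>2 * twisted_norm_sq \<mu> m t f"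
proof -
  have "(cmod (\<Sum>x\<in>UNIV. of_real (\<mu> (x, y)) * Tfun m t x y * (of_real c * f x)))\<^sup>2 =
        c\<^sup>2 * (cmod (\<Sum>x\<in>UNIV. of_real (\<mu> (x, y)) * Tfun m t x y * f x))\<^sup>2" for y
  proof -
    have "(\<Sum>x\<in>UNIV. of_real (\<mu> (x, y)) * Tfun m t x y * (of_real c * f x)) =
          of_real c * (\<Sum>x\<in>UNIV. of_real (\<mu> (x, y)) * Tfun m t x y * f x)"
      by (simp add: sum_distrib_left mult_ac)
    then show ?thesis by (simp add: norm_mult power_mult_distrib)
  qed
  then show ?thesis unfolding twisted_norm_sq_def by (simp add: sum_distrib_left)
qed

lemma twisted_norm_sq_le_wnorm_sq:
  assumes "\<And>p. 0 \<le> \<mu> p" and "\<And>y. 0 < marginal_snd \<mu> y"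
  shows "twisted_norm_sq \<mu> m t f \<le> wnorm_sq (marginal_fst \<mu>) f"
proof -
  have "0 \<le> wnorm_sq (marginal_fst \<mu>) f - twisted_norm_sq \<mu> m t f"
    unfolding wnorm_sq_minus_twisted_norm_sq[OF assms(2)]
    using assms by (intro sum_nonneg divide_nonneg_pos mult_nonneg_nonneg) auto
  then show ?thesis by simp
qed

lemma consistent_of_twisted_norm_sq_eq:
  assumes nonneg: "\<And>p. 0 \<le> \<mu> p" and pos: "\<And>y. 0 < marginal_snd \<mu> y"
    and eq: "twisted_norm_sq \<mu> m t f = wnorm_sq (marginal_fst \<mu>) f"
    and "\<mu> (x, y) \<noteq> 0" and "\<mu> (x', y) \<noteq> 0"
  shows "Tfun m t x y * f x = Tfun m t x' y * f x'"
proof -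
  define d where "d = (\<lambda>y x x'. \<mu> (x, y) * \<mu> (x', y) * (cmod (Tfun m t x y * f x - Tfun m t x' y * f x'))\<^sup>2)"
  have d_nonneg: "0 \<le> d y x x'" for y x x' unfolding d_def using nonneg by simp
  have "(\<Sum>y\<in>UNIV. (\<Sum>x\<in>UNIV. \<Sum>x'\<in>UNIV. d y x x') / (2 * marginal_snd \<mu> y)) = 0"
    using wnorm_sq_minus_twisted_norm_sq[OF pos, of f m t] eq unfolding d_def by simp
  then have "(\<Sum>x\<in>UNIV. \<Sum>x'\<in>UNIV. d y x x') / (2 * marginal_snd \<mu> y) = 0"
    using d_nonneg pos by (subst (asm) sum_nonneg_eq_0_iff) (auto intro!: sum_nonneg divide_nonneg_pos)
  then have "(\<Sum>x\<in>UNIV. \<Sum>x'\<in>UNIV. d y x x') = 0" using pos[of y] by simp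
  then have "d y x x' = 0"
    using d_nonneg by (simp add: sum_nonneg sum_nonneg_eq_0_iff)
  then show ?thesis using assms(4,5) unfolding d_def by simp
qed

lemma twisted_norm_sq_less_wnorm_sq:
  fixes \<mu> :: "'a::finite \<times> 'b::finite \<Rightarrow> real"
  assumes "m \<ge> 1" and "is_distribution \<mu>" and "game_connected \<mu>" and "xor_value \<mu> m t < 1"
    and "f x0 \<noteq> 0"
  shows "twisted_norm_sq \<mu> m t f < wnorm_sq (marginal_fst \<mu>) f"
proof (rule ccontr)
  have nonneg: "\<And>p. 0 \<le> \<mu> p" and total: "(\<Sum>p\<in>UNIV. \<mu> p) = 1"
    using assms(2) unfolding is_distribution_def by auto
  have pos: "\<And>y. 0 < marginal_snd \<mu> y" using marginal_snd_pos[OF nonneg assms(3)] .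
  assume "\<not> twisted_norm_sq \<mu> m t f < wnorm_sq (marginal_fst \<mu>) f"
  then have eq: "twisted_norm_sq \<mu> m t f = wnorm_sq (marginal_fst \<mu>) f"
    using twisted_norm_sq_le_wnorm_sq[OF nonneg pos, of m t f] by linarith
  obtain F G where "\<forall>x y. \<mu> (x, y) \<noteq> 0 \<longrightarrow> int m dvd (F x + G y - t x y)"
    using perfect_strategy_of_consistent[OF assms(1,3) consistent_of_twisted_norm_sq_eq[OF nonneg pos eq]
        assms(5)] by blast
  then have "win_prob \<mu> m t F G = 1" using win_prob_perfect total by metis
  then show False using win_prob_le_xor_value[OF assms(1)] assms(4) by (metis not_le)
qed

lemma twisted_norm_sq_contraction:
  fixes \<mu> :: "'a::finite \<times> 'b::finite \<Rightarrow> real"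
  assumes "m \<ge> 1" and "is_distribution \<mu>" and "game_connected \<mu>" and "xor_value \<mu> m t < 1"
  shows "\<exists>\<rho>. 0 < \<rho> \<and> \<rho> < 1 \<and> (\<forall>f. twisted_norm_sq \<mu> m t f \<le> \<rho>\<^sup>2 * wnorm_sq (marginal_fst \<mu>) f)"
proof -
  have nonneg: "\<And>p. 0 \<le> \<mu> p" using assms(2) unfolding is_distribution_def by auto
  note pos_fst = marginal_fst_pos[OF nonneg assms(3)] and pos_snd = marginal_snd_pos[OF nonneg assms(3)]
  \<comment> \<open>Move to \<open>complex^'a\<close> for compactness; rescaling by \<open>\<surd>\<mu>\<^sub>X\<close> makes the weighted norm Euclidean.\<close>
  define unweight :: "complex^'a \<Rightarrow> 'a \<Rightarrow> complex"
    where "unweight u x = u $ x / of_real (sqrt (marginal_fst \<mu> x))" for u x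
  define Q where "Q u = twisted_norm_sq \<mu> m t (unweight u)" for u
  have norm_unweight: "wnorm_sq (marginal_fst \<mu>) (unweight u) = (norm u)\<^sup>2" for u
    unfolding unweight_def using pos_fst by (rule wnorm_sq_divide_sqrt_weight)
  have "continuous_on UNIV Q"
    unfolding Q_def twisted_norm_sq_def unweight_def
    by (intro continuous_intros) (use pos_fst pos_snd in \<open>auto simp: less_imp_neq[symmetric]\<close>)
  moreover have "Q (c *\<^sub>R u) = c\<^sup>2 * Q u" for c u
  proof -
    have "unweight (c *\<^sub>R u) = (\<lambda>x. of_real c * unweight u x)"
      unfolding unweight_def vector_scaleR_component by (simp add: scaleR_conv_of_real)
    then show ?thesis unfolding Q_def by (simp add: twisted_norm_sq_scale)
  qed
  moreover have "Q u < (norm u)\<^sup>2" if "u \<noteq> 0" for u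
  proof -
    obtain x where "u $ x \<noteq> 0" using \<open>u \<noteq> 0\<close> by (metis vec_eq_iff zero_index)
    then have "unweight u x \<noteq> 0" unfolding unweight_def using pos_fst[of x] by simp
    then show ?thesis
      unfolding Q_def norm_unweight[symmetric] using twisted_norm_sq_less_wnorm_sq[OF assms] by blast
  qed
  ultimately obtain \<kappa> where \<kappa>: "0 < \<kappa>" "\<kappa> < 1" and bound: "\<And>u. Q u \<le> \<kappa> * (norm u)\<^sup>2"
    using uniform_gap_on_sphere by blast
  have "twisted_norm_sq \<mu> m t f \<le> (sqrt \<kappa>)\<^sup>2 * wnorm_sq (marginal_fst \<mu>) f" for f
  proof -
    have "unweight (\<chi> x. of_real (sqrt (marginal_fst \<mu> x)) * f x) = f"
      unfolding unweight_def using pos_fst by (auto simp: less_imp_neq[symmetric])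
    then show ?thesis
      using bound[of "\<chi> x. of_real (sqrt (marginal_fst \<mu> x)) * f x"] \<kappa>
      unfolding Q_def norm_unweight[symmetric] by simp
  qed
  then show ?thesis using \<kappa> by (intro exI[of _ "sqrt \<kappa>"]) auto
qed

section \<open>Tensorization\<close>

definition prod_wnorm_sq :: "('a::finite \<Rightarrow> real) \<Rightarrow> nat \<Rightarrow> ((nat \<Rightarrow> 'a) \<Rightarrow> complex) \<Rightarrow> real" where
  "prod_wnorm_sq w n F = (\<Sum>x\<in>PiE {..<n} (\<lambda>_. UNIV). (\<Prod>i<n. w (x i)) * (cmod (F x))\<^sup>2)"

lemma prod_wnorm_sq_Suc_inner:
  "prod_wnorm_sq w (Suc n) F =
   (\<Sum>x\<in>PiE {..<n} (\<lambda>_. UNIV). (\<Prod>i<n. w (x i)) * wnorm_sq w (\<lambda>a. F (x(n := a))))"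
  unfolding prod_wnorm_sq_def wnorm_sq_def sum_PiE_lessThan_Suc
  by (simp add: prod.lessThan_Suc sum_distrib_left mult_ac)

lemma prod_wnorm_sq_Suc_outer:
  "prod_wnorm_sq w (Suc n) F = (\<Sum>a\<in>UNIV. w a * prod_wnorm_sq w n (\<lambda>x. F (x(n := a))))"
  unfolding prod_wnorm_sq_Suc_inner unfolding wnorm_sq_def prod_wnorm_sq_def
  by (simp add: sum_distrib_left mult_ac) (rule sum.swap)

lemma prod_wnorm_sq_nonneg: "(\<And>a. 0 \<le> w a) \<Longrightarrow> 0 \<le> prod_wnorm_sq w n F"
  unfolding prod_wnorm_sq_def by (intro sum_nonneg mult_nonneg_nonneg prod_nonneg) auto

lemma prod_wnorm_sq_le_1:
  assumes "\<And>a. 0 \<le> w a" and "(\<Sum>a\<in>UNIV. w a) = 1"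
    and "\<forall>x\<in>PiE {..<n} (\<lambda>_. UNIV). norm (F x) \<le> 1"
  shows "prod_wnorm_sq w n F \<le> 1"
proof -
  have "prod_wnorm_sq w n F \<le> (\<Sum>x\<in>PiE {..<n} (\<lambda>_. UNIV). \<Prod>i<n. w (x i))"
    unfolding prod_wnorm_sq_def
    using assms(1,3) by (intro sum_mono mult_right_le_one_le prod_nonneg) (auto simp: power_le_one)
  also have "\<dots> = (\<Sum>a\<in>UNIV. w a) ^ n"
    using prod_sum_PiE[of "{..<n}" "\<lambda>_. UNIV" "\<lambda>_. w"] by simp
  finally show ?thesis using assms(2) by simp
qed

lemma corr_Suc:
  "corr \<mu> m t (Suc n) F G =
   (\<Sum>y\<in>UNIV. corr \<mu> m t n (\<lambda>x. \<Sum>a\<in>UNIV. of_real (\<mu> (a, y)) * Tfun m t a y * F (x(n := a)))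
                              (\<lambda>z. G (z(n := y))))"
proof -
  define K where "K x z a b = of_real (\<Prod>i<n. \<mu> (x i, z i)) * (\<Prod>i<n. Tfun m t (x i) (z i)) *
                           (of_real (\<mu> (a, b)) * Tfun m t a b) * F (x(n := a)) * G (z(n := b))" for x z a b
  let ?X = "PiE {..<n} (\<lambda>_. UNIV :: 'a set)" and ?Z = "PiE {..<n} (\<lambda>_. UNIV :: 'b set)"
  have "corr \<mu> m t (Suc n) F G = (\<Sum>x\<in>?X. \<Sum>a\<in>UNIV. \<Sum>z\<in>?Z. \<Sum>b\<in>UNIV. K x z a b)"
    unfolding corr_def sum_PiE_lessThan_Suc K_def by (simp add: prod.lessThan_Suc mult_ac)
  also have "\<dots> = (\<Sum>x\<in>?X. \<Sum>z\<in>?Z. \<Sum>a\<in>UNIV. \<Sum>b\<in>UNIV. K x z a b)"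
    by (intro sum.cong refl sum.swap)
  also have "\<dots> = (\<Sum>x\<in>?X. \<Sum>z\<in>?Z. \<Sum>b\<in>UNIV. \<Sum>a\<in>UNIV. K x z a b)"
    by (intro sum.cong refl sum.swap)
  also have "\<dots> = (\<Sum>x\<in>?X. \<Sum>b\<in>UNIV. \<Sum>z\<in>?Z. \<Sum>a\<in>UNIV. K x z a b)"
    by (intro sum.cong refl sum.swap)
  also have "\<dots> = (\<Sum>b\<in>UNIV. \<Sum>x\<in>?X. \<Sum>z\<in>?Z. \<Sum>a\<in>UNIV. K x z a b)"
    by (rule sum.swap)
  also have "\<dots> = (\<Sum>y\<in>UNIV. corr \<mu> m t n (\<lambda>x. \<Sum>a\<in>UNIV. of_real (\<mu> (a, y)) * Tfun m t a y * F (x(n := a)))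
                                              (\<lambda>z. G (z(n := y))))"
    unfolding corr_def K_def by (simp add: sum_distrib_left sum_distrib_right mult_ac)
  finally show ?thesis .
qed

lemma sum_prod_wnorm_sq_twisted_le:
  fixes \<mu> :: "'a::finite \<times> 'b::finite \<Rightarrow> real"
  assumes nonneg: "\<And>p. 0 \<le> \<mu> p"
    and contraction: "\<And>f. twisted_norm_sq \<mu> m t f \<le> \<rho>\<^sup>2 * wnorm_sq (marginal_fst \<mu>) f"
  shows "(\<Sum>y\<in>UNIV. prod_wnorm_sq (marginal_fst \<mu>) n
            (\<lambda>x. \<Sum>a\<in>UNIV. of_real (\<mu> (a, y)) * Tfun m t a y * F (x(n := a))) / marginal_snd \<mu> y)
         \<le> \<rho>\<^sup>2 * prod_wnorm_sq (marginal_fst \<mu>) (Suc n) F"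
proof -
  let ?X = "PiE {..<n} (\<lambda>_. UNIV :: 'a set)"
  define w where "w x = (\<Prod>i<n. marginal_fst \<mu> (x i))" for x
  have w_nonneg: "0 \<le> w x" for x
    unfolding w_def marginal_fst_def using nonneg by (simp add: prod_nonneg sum_nonneg)
  have "(\<Sum>y\<in>UNIV. prod_wnorm_sq (marginal_fst \<mu>) n
            (\<lambda>x. \<Sum>a\<in>UNIV. of_real (\<mu> (a, y)) * Tfun m t a y * F (x(n := a))) / marginal_snd \<mu> y)
        = (\<Sum>x\<in>?X. w x * twisted_norm_sq \<mu> m t (\<lambda>a. F (x(n := a))))"
    unfolding prod_wnorm_sq_def twisted_norm_sq_def w_def
    by (simp add: sum_divide_distrib sum_distrib_left) (rule sum.swap)
  also have "\<dots> \<le> (\<Sum>x\<in>?X. w x * (\<rho>\<^sup>2 * wnorm_sq (marginal_fst \<mu>) (\<lambda>a. F (x(n := a)))))"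
    by (intro sum_mono mult_left_mono contraction w_nonneg)
  also have "\<dots> = \<rho>\<^sup>2 * prod_wnorm_sq (marginal_fst \<mu>) (Suc n) F"
    unfolding prod_wnorm_sq_Suc_inner w_def by (simp add: sum_distrib_left mult_ac)
  finally show ?thesis .
qed

lemma norm_corr_le:
  fixes \<mu> :: "'a::finite \<times> 'b::finite \<Rightarrow> real"
  assumes nonneg: "\<And>p. 0 \<le> \<mu> p" and pos_snd: "\<And>y. 0 < marginal_snd \<mu> y" and "0 \<le> \<rho>"
    and contraction: "\<And>f. twisted_norm_sq \<mu> m t f \<le> \<rho>\<^sup>2 * wnorm_sq (marginal_fst \<mu>) f"
  shows "norm (corr \<mu> m t n F G) \<le>
         \<rho> ^ n * sqrt (prod_wnorm_sq (marginal_fst \<mu>) n F) * sqrt (prod_wnorm_sq (marginal_snd \<mu>) n G)"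
proof (induction n arbitrary: F G)
  case 0
  then show ?case
    unfolding corr_def prod_wnorm_sq_def by (simp add: PiE_empty_domain norm_mult)
next
  case (Suc n)
  have nonneg_fst: "0 \<le> marginal_fst \<mu> x" for x
    unfolding marginal_fst_def using nonneg by (simp add: sum_nonneg)
  define H where "H y x = (\<Sum>a\<in>UNIV. of_real (\<mu> (a, y)) * Tfun m t a y * F (x(n := a)))" for y x
  define A where "A y = prod_wnorm_sq (marginal_fst \<mu>) n (H y)" for y
  define B where "B y = prod_wnorm_sq (marginal_snd \<mu>) n (\<lambda>z. G (z(n := y)))" for y
  have "norm (corr \<mu> m t (Suc n) F G) \<le> (\<Sum>y\<in>UNIV. norm (corr \<mu> m t n (H y) (\<lambda>z. G (z(n := y)))))"
    unfolding corr_Suc H_def by (rule norm_sum)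
  also have "\<dots> \<le> \<rho> ^ n * (\<Sum>y\<in>UNIV. sqrt (A y) * sqrt (B y))"
    unfolding A_def B_def sum_distrib_left by (intro sum_mono) (metis Suc.IH mult.assoc)
  also have "\<dots> \<le> \<rho> ^ n * (sqrt (\<Sum>y\<in>UNIV. A y / marginal_snd \<mu> y) * sqrt (\<Sum>y\<in>UNIV. marginal_snd \<mu> y * B y))"
    using \<open>0 \<le> \<rho>\<close> pos_snd unfolding A_def B_def
    by (intro mult_left_mono sum_sqrt_mult_le_weighted prod_wnorm_sq_nonneg nonneg_fst) (auto intro: less_imp_le)
  also have "\<dots> \<le> \<rho> ^ n * (sqrt (\<rho>\<^sup>2 * prod_wnorm_sq (marginal_fst \<mu>) (Suc n) F) *
                             sqrt (prod_wnorm_sq (marginal_snd \<mu>) (Suc n) G))"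
    using \<open>0 \<le> \<rho>\<close> sum_prod_wnorm_sq_twisted_le[OF nonneg contraction, of n F]
      prod_wnorm_sq_nonneg[of "marginal_snd \<mu>"] pos_snd
    unfolding A_def H_def B_def prod_wnorm_sq_Suc_outer[of "marginal_snd \<mu>", symmetric]
    by (intro mult_left_mono mult_right_mono) (auto intro: less_imp_le)
  also have "\<dots> = \<rho> ^ Suc n * sqrt (prod_wnorm_sq (marginal_fst \<mu>) (Suc n) F) *
                  sqrt (prod_wnorm_sq (marginal_snd \<mu>) (Suc n) G)"
    using \<open>0 \<le> \<rho>\<close> by (simp add: real_sqrt_mult mult_ac)
  finally show ?case .
qed

lemma norm_corr_le_pow:
  fixes \<mu> :: "'a::finite \<times> 'b::finite \<Rightarrow> real"
  assumes "is_distribution \<mu>" and "game_connected \<mu>" and "0 \<le> \<rho>"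
    and contraction: "\<And>f. twisted_norm_sq \<mu> m t f \<le> \<rho>\<^sup>2 * wnorm_sq (marginal_fst \<mu>) f"
    and F: "\<forall>x\<in>PiE {..<n} (\<lambda>_. UNIV). norm (F x) \<le> 1"
    and G: "\<forall>y\<in>PiE {..<n} (\<lambda>_. UNIV). norm (G y) \<le> 1"
  shows "norm (corr \<mu> m t n F G) \<le> \<rho> ^ n"
proof -
  have nonneg: "\<And>p. 0 \<le> \<mu> p" and total: "(\<Sum>p\<in>UNIV. \<mu> p) = 1"
    using assms(1) unfolding is_distribution_def by auto
  note pos_fst = marginal_fst_pos[OF nonneg assms(2)] and pos_snd = marginal_snd_pos[OF nonneg assms(2)]
  have "prod_wnorm_sq (marginal_fst \<mu>) n F \<le> 1"
    by (rule prod_wnorm_sq_le_1) (use pos_fst F total in \<open>auto simp: less_imp_le sum_marginal_fst\<close>)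
  moreover have "prod_wnorm_sq (marginal_snd \<mu>) n G \<le> 1"
    by (rule prod_wnorm_sq_le_1) (use pos_snd G total in \<open>auto simp: less_imp_le sum_marginal_snd\<close>)
  ultimately have norms_le_1:
    "sqrt (prod_wnorm_sq (marginal_fst \<mu>) n F) * sqrt (prod_wnorm_sq (marginal_snd \<mu>) n G) \<le> 1"
    using prod_wnorm_sq_nonneg[of "marginal_snd \<mu>" n G] pos_snd by (intro mult_le_one) (auto intro: less_imp_le)
  have "norm (corr \<mu> m t n F G) \<le>
        \<rho> ^ n * (sqrt (prod_wnorm_sq (marginal_fst \<mu>) n F) * sqrt (prod_wnorm_sq (marginal_snd \<mu>) n G))"
    using norm_corr_le[OF nonneg pos_snd \<open>0 \<le> \<rho>\<close> contraction] by (simp add: mult.assoc)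
  also have "\<dots> \<le> \<rho> ^ n" using norms_le_1 \<open>0 \<le> \<rho>\<close> by (simp add: mult_left_le)
  finally show ?thesis .
qed

theorem lemma2p2:
  fixes \<mu> :: "'a::finite \<times> 'b::finite \<Rightarrow> real" and m :: nat and t :: "'a \<Rightarrow> 'b \<Rightarrow> int"
  assumes "m \<ge> 1"
    and "is_distribution \<mu>"
    and "game_connected \<mu>"
    and "xor_value \<mu> m t < 1"
  shows "\<exists>c>0. \<forall>n F G.
           (\<forall>x\<in>PiE {..<n} (\<lambda>_. UNIV :: 'a set). norm (F x) \<le> 1) \<longrightarrow>
           (\<forall>y\<in>PiE {..<n} (\<lambda>_. UNIV :: 'b set). norm (G y) \<le> 1) \<longrightarrow>
           norm (corr \<mu> m t n F G) \<le> 2 powr (- c * real n)"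
proof -
  obtain \<rho> where \<rho>: "0 < \<rho>" "\<rho> < 1"
    and contraction: "\<And>f. twisted_norm_sq \<mu> m t f \<le> \<rho>\<^sup>2 * wnorm_sq (marginal_fst \<mu>) f"
    using twisted_norm_sq_contraction[OF assms] by blast
  show ?thesis
  proof (intro exI[of _ "- log 2 \<rho>"] conjI allI impI)
    show "0 < - log 2 \<rho>" using \<rho> by simp
    fix n :: nat and F :: "(nat \<Rightarrow> 'a) \<Rightarrow> complex" and G :: "(nat \<Rightarrow> 'b) \<Rightarrow> complex"
    assume "\<forall>x\<in>PiE {..<n} (\<lambda>_. UNIV :: 'a set). norm (F x) \<le> 1"
      and "\<forall>y\<in>PiE {..<n} (\<lambda>_. UNIV :: 'b set). norm (G y) \<le> 1"
    then have "norm (corr \<mu> m t n F G) \<le> \<rho> ^ n"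
      using norm_corr_le_pow[OF assms(2,3) less_imp_le[OF \<rho>(1)] contraction] by blast
    also have "\<rho> ^ n = 2 powr (- (- log 2 \<rho>) * real n)"
      using \<rho> by (simp add: powr_powr[symmetric] powr_realpow)
    finally show "norm (corr \<mu> m t n F G) \<le> 2 powr (- (- log 2 \<rho>) * real n)" .
  qed
qed

end
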